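(* Let $p$ be a prime, $r$ an integer, $j\in\{1,2,\dots,p-1\}$ and $t,N\in\mathbb{N}$, and let $\zeta_N$ be an $N$th root of unity. If $s$ is an integer such that $$\binom{s}{p^2-j}\equiv0\pmod p,$$ then for all $m,\lambda\in\mathbb{N}$, $$\xi_{p^2r,s,N,t}(p^\lambda m-j)\equiv0\pmod{p^{\lambda-1}}.$$
   Context: $(q)_n=\prod_{k=1}^n(1-q^k)$, $\binom{n}{k}_q=\frac{(q)_n}{(q)_{n-k}(q)_k}$ (zero unless $0\le k\le n$); $\binom{s}{k}=s(s-1)\cdots(s-k+1)/k!$ for any integer $s$. $\mathscr{F}_1(q)=\sum_{n\ge0}(q)_n$. For $t\ge2$ let $m(t)=2^{t-1}$; $h''(t)=(2^t-1)/3$, $h'(t)=(2^t-4)/3$, $a(t)=(2^{t-1}+1)/3$ if $t$ is even, and $h''(t)=(2^t-2)/3$, $h'(t)=(2^t-5)/3$, $a(t)=(2^t+1)/3$ if $t$ is odd, and $$\mathscr{F}_t(q)=(-1)^{h''(t)}q^{-h'(t)}\sum_{n\ge0}(q)_n\sum_{(j_1,\dots,j_{m(t)-1})}q^{\frac{-a(t)+\sum_{\ell}\ell j_\ell}{m(t)}+\sum_{\ell}\binom{j_\ell}{2}}\sum_{k=0}^{m(t)-1}\prod_{\ell=1}^{m(t)-1}\binom{n+I(\ell\le k)}{j_\ell}_q,$$ the middle sum over tuples of nonnegative integers with $3\sum_{\ell}\ell j_\ell\equiv1\pmod{m(t)}$, $I(\ell\le k)=1$ if $\ell\le k$ else $0$.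 For $R\in\mathbb{Z}$, $\mathscr{F}_t((\zeta_N-q)^R)$ is the formal power series in $q$ over $\mathbb{Z}[\zeta_N]$ obtained by substituting $(\zeta_N-q)^R$ for $q$ termwise, and $\xi_{R,s,N,t}(n)$ are defined by $(\zeta_N-q)^s\mathscr{F}_t((\zeta_N-q)^R)=\sum_{n\ge0}\xi_{R,s,N,t}(n)q^n$. $\rho\equiv0\pmod{p^\mu}$ in $\mathbb{Z}[\zeta_N]$ means $\rho\in p^\mu\mathbb{Z}[\zeta_N]$. *)

theory Defs
  imports Complex_Main "HOL-Computational_Algebra.Formal_Power_Series"
    "HOL-Computational_Algebra.Polynomial" "HOL-Analysis.Infinite_Sum"
begin

definition qpoch :: "nat \<Rightarrow> rat poly" where
  "qpoch n = (\<Prod>k\<in>{1..n}. 1 - monom 1 k)"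

text \<open>Gaussian binomial (q)_n / ((q)_{n-k} (q)_k), zero unless k <= n
  (the division is exact polynomial division).\<close>
definition gauss_binom :: "nat \<Rightarrow> nat \<Rightarrow> rat poly" where
  "gauss_binom n k = (if k \<le> n then qpoch n div (qpoch (n - k) * qpoch k) else 0)"

definition ibinom :: "int \<Rightarrow> nat \<Rightarrow> int" where
  "ibinom s k = (\<Prod>i<k. s - int i) div fact k"

text \<open>Integer powers of the invertible power series w = zeta - q (zeta nonzero).\<close>
definition wpow :: "complex \<Rightarrow> int \<Rightarrow> complex fps" where
  "wpow z e = (if e \<ge> 0 then (fps_const z - fps_X) ^ nat e
               else inverse (fps_const z - fps_X) ^ nat (- e))"

definition subst_poly :: "complex \<Rightarrow> int \<Rightarrow> rat poly \<Rightarrow> complex fps" where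
  "subst_poly z R P = poly (map_poly (\<lambda>c. fps_const (of_rat c)) P) (wpow z R)"

definition mt :: "nat \<Rightarrow> nat" where "mt t = 2 ^ (t - 1)"

definition hpp :: "nat \<Rightarrow> int" where
  "hpp t = (if even t then (2 ^ t - 1) div 3 else (2 ^ t - 2) div 3)"

definition hp :: "nat \<Rightarrow> int" where
  "hp t = (if even t then (2 ^ t - 4) div 3 else (2 ^ t - 5) div 3)"

definition aparam :: "nat \<Rightarrow> int" where
  "aparam t = (if even t then (2 ^ (t - 1) + 1) div 3 else (2 ^ t + 1) div 3)"

definition tuples :: "nat \<Rightarrow> (nat \<Rightarrow> nat) set" where
  "tuples t = {j. (\<forall>l. l \<notin> {1..mt t - 1} \<longrightarrow> j l = 0) \<and>
                  (3 * (\<Sum>l=1..mt t - 1. l * j l)) mod mt t = 1 mod mt t}"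

text \<open>The exponent (-a(t) + sum l j_l)/m(t) + sum binom(j_l,2) (an integer,
  the division being exact for admissible tuples).\<close>
definition qexp :: "nat \<Rightarrow> (nat \<Rightarrow> nat) \<Rightarrow> int" where
  "qexp t j = (- aparam t + int (\<Sum>l=1..mt t - 1. l * j l)) div int (mt t)
              + int (\<Sum>l=1..mt t - 1. j l choose 2)"

text \<open>The (n, j)-term of F_t after substituting q := (zeta - q)^R, for t >= 2.\<close>
definition Fterm :: "nat \<Rightarrow> complex \<Rightarrow> int \<Rightarrow> nat \<times> (nat \<Rightarrow> nat) \<Rightarrow> complex fps" where
  "Fterm t z R nj = (case nj of (n, j) \<Rightarrow>
     fps_const ((-1) ^ nat (hpp t)) * wpow z (R * (- hp t)) *
     subst_poly z R (qpoch n) * wpow z (R * qexp t j) *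
     (\<Sum>k<mt t. \<Prod>l=1..mt t - 1.
         subst_poly z R (gauss_binom (n + (if l \<le> k then 1 else 0)) (j l))))"

text \<open>F_t((zeta - q)^R) as a formal power series: termwise substitution,
  coefficients obtained by summing the coefficients of all terms
  (only finitely many terms contribute to each coefficient).\<close>
definition F_subst :: "nat \<Rightarrow> complex \<Rightarrow> int \<Rightarrow> complex fps" where
  "F_subst t z R =
     (if t = 1 then Abs_fps (\<lambda>i. infsum (\<lambda>n::nat. fps_nth (subst_poly z R (qpoch n)) i) UNIV)
      else Abs_fps (\<lambda>i. infsum (\<lambda>nj. fps_nth (Fterm t z R nj) i) (UNIV \<times> tuples t)))"

definition xi :: "int \<Rightarrow> int \<Rightarrow> complex \<Rightarrow> nat \<Rightarrow> nat \<Rightarrow> complex" where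
  "xi R s z t n = fps_nth (wpow z s * F_subst t z R) n"

definition Zzeta :: "nat \<Rightarrow> complex \<Rightarrow> complex set" where
  "Zzeta N z = {x. \<exists>c::nat \<Rightarrow> int. x = (\<Sum>k<N. of_int (c k) * z ^ k)}"

definition cong0 :: "nat \<Rightarrow> complex \<Rightarrow> complex \<Rightarrow> nat \<Rightarrow> nat \<Rightarrow> bool" where
  "cong0 N z x p mu = (\<exists>y \<in> Zzeta N z. x = of_nat (p ^ mu) * y)"

end

theory Submission
  imports Defs
begin

(* Write w = zeta - q. Modulo q^(n+1), F_t(w^R) is a Z-linear combination of integer powers
   w^(R e): the q-Pochhammer symbols and Gaussian binomials are integer polynomials in q, every
   factor 1 - w^(R N c) of (q)_a has constant term 1 - zeta^(R N c) = 0, so the terms with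
   a >= N(n+1) vanish to order n+1, and a Gaussian binomial vanishes once its lower index exceeds
   the upper one.  Since the n-th coefficient of w^A is (-1)^n binom(A,n) zeta^(A-n), xi(n) is a
   Z[zeta]-combination of binom(s + R e, n), and it suffices that p^(lam-1) divides these.
   With R = p^2 r every A = s + R e is congruent to s mod p^2.  By Vandermonde, expanding
   binom(s, p^2-j) around s + k shows that p | binom(s, p^2-j) forbids p^2 | s + k for
   1 <= k <= j.  For M = p^lam m and n = M - j, trinomial revision gives
   binom(A,n) (A-n)(A-n-1)...(A-M+1) = binom(A,M) M(M-1)...(M-j+1); the right side is divisible
   by p^lam, while the j consecutive factors A - M + k on the left contain at most one multiple
   of p and no multiple of p^2, so p^(lam-1) | binom(A,n). *)

unbundle fps_syntax

section \<open>Binomial coefficients modulo powers of a prime\<close>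

lemma ibinom_mult_fact: "ibinom s k * fact k = (\<Prod>i<k. s - int i)"
  and of_int_ibinom: "of_int (ibinom s k) = (of_int s gchoose k :: 'a :: field_char_0)"
proof -
  obtain g where g: "g * fact k = (\<Prod>i<k. s - int i)" "of_int g = (of_int s gchoose k :: 'a)"
    using gbinomial_int_mult_fact'[of s k] of_int_gbinomial[of s k] by (auto simp: atLeast0LessThan)
  then have "ibinom s k = g" unfolding ibinom_def by (metis fact_nonzero nonzero_mult_div_cancel_right)
  with g show "ibinom s k * fact k = (\<Prod>i<k. s - int i)" "of_int (ibinom s k) = (of_int s gchoose k :: 'a)"
    by simp_all
qed

lemma ibinom_0 [simp]: "ibinom s 0 = 1"
  by (simp add: ibinom_def)

lemma ibinom_of_nat: "ibinom (int n) k = int (n choose k)"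
  using of_int_ibinom[of "int n" k, where 'a=rat] binomial_gbinomial[of n k, where 'a=rat]
  by (metis of_int_eq_iff of_int_of_nat_eq)

lemma prime_square_not_dvd_prod:
  fixes p :: "'b :: factorial_semiring_gcd"
  assumes p: "prime p" and "finite I"
    and not_sq: "\<And>i. i \<in> I \<Longrightarrow> \<not> p^2 dvd f i"
    and unique: "\<And>i i'. i \<in> I \<Longrightarrow> i' \<in> I \<Longrightarrow> p dvd f i \<Longrightarrow> p dvd f i' \<Longrightarrow> i = i'"
  shows "\<not> p^2 dvd (\<Prod>i\<in>I. f i)"
proof (cases "\<exists>i\<in>I. p dvd f i")
  case False
  then have "\<not> p dvd (\<Prod>i\<in>I. f i)" using prime_dvd_prod_iff[OF \<open>finite I\<close> p] by blast
  then show ?thesis by (meson dvd_power dvd_trans pos2)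
next
  case True
  then obtain i0 where i0: "i0 \<in> I" "p dvd f i0" by blast
  have "\<not> p dvd (\<Prod>i\<in>I-{i0}. f i)"
    using prime_dvd_prod_iff[of "I-{i0}" p f] \<open>finite I\<close> p unique i0 by auto
  then have "coprime (p^2) (\<Prod>i\<in>I-{i0}. f i)" using p by (simp add: prime_imp_coprime)
  moreover have "(\<Prod>i\<in>I. f i) = f i0 * (\<Prod>i\<in>I-{i0}. f i)"
    using prod.remove[OF \<open>finite I\<close> i0(1)] by simp
  ultimately show ?thesis using not_sq[OF i0(1)] by (simp add: coprime_dvd_mult_left_iff)
qed

lemma prime_power_dvd_mult_not_square_dvd:
  fixes p :: "'b :: factorial_semiring_gcd"
  assumes p: "prime p" and dvd: "p^lam dvd x * y" and not_sq: "\<not> p^2 dvd y"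
  shows "p^(lam - 1) dvd x"
proof (cases "p dvd y")
  case True
  then obtain y' where y': "y = p * y'" by blast
  have "coprime (p^(lam - 1)) y'"
    using not_sq y' p by (simp add: prime_imp_coprime power2_eq_square)
  moreover have "p^(lam - 1) dvd x * y'"
  proof (cases lam)
    case (Suc l)
    then show ?thesis using dvd y' p by (simp add: ac_simps not_prime_0 dvd_times_left_cancel_iff)
  qed simp
  ultimately show ?thesis by (simp add: coprime_dvd_mult_left_iff)
next
  case False
  then have "coprime (p^lam) y" using p by (simp add: prime_imp_coprime)
  then have "p^lam dvd x" using dvd by (simp add: coprime_dvd_mult_left_iff)
  then show ?thesis by (meson diff_le_self dvd_trans le_imp_power_dvd)
qed

lemma prime_dvd_ibinom_square_multiple:
  fixes p :: nat
  assumes p: "prime p" and i: "0 < i" "i < p^2"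
  shows "int p dvd ibinom (int p^2 * e) i"
proof -
  define a where "a = int p^2 * e"
  have "real_of_int (int i * ibinom a i) = real_of_int (a * ibinom (a - 1) (i - 1))"
    using gbinomial_absorption[of "i - 1" "real_of_int a"] i by (simp add: of_int_ibinom)
  then have "int i * ibinom a i = a * ibinom (a - 1) (i - 1)"
    by (simp only: of_int_eq_iff)
  then have sq: "int p^2 dvd int i * ibinom a i"
    by (simp add: a_def)
  have pi: "prime (int p)" using p by simp
  show ?thesis
  proof (cases "int p dvd int i")
    case False
    then have "int p^2 dvd ibinom a i"
      using sq pi by (simp add: prime_imp_coprime coprime_dvd_mult_right_iff)
    then show ?thesis unfolding a_def by (metis dvd_power dvd_trans pos2)
  next
    case True
    then obtain i' where i': "int i = int p * i'" by blast
    have p0: "0 < int p" using p by (simp add: prime_gt_0_nat)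
    have "0 < int p * i'" using i i' by linarith
    then have "0 < i'" using p0 by (simp add: zero_less_mult_iff)
    moreover have "int p * i' < int p * int p"
      using i i' by (simp flip: of_nat_mult add: power2_eq_square)
    then have "i' < int p" using p0 by simp
    ultimately have "\<not> int p dvd i'" by (simp add: zdvd_not_zless)
    moreover have "int p dvd i' * ibinom a i"
      using sq i' p by (simp add: power2_eq_square ac_simps prime_gt_0_nat)
    ultimately show ?thesis using pi unfolding a_def by (simp add: prime_dvd_mult_iff)
  qed
qed

lemma prime_not_dvd_ibinom_neg:
  fixes p :: nat
  assumes p: "prime p" and k: "1 \<le> k" "k \<le> j" and j: "j < p"
  shows "\<not> int p dvd ibinom (- int k) (p^2 - j)"
proof
  assume dvd: "int p dvd ibinom (- int k) (p^2 - j)"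
  define L where "L = p^2 - j"
  define M where "M = L + k - 1"
  have "j < p^2"
    using j le_square[of p] unfolding power2_eq_square by linarith
  have "M choose L = M choose (k - 1)"
    using k binomial_symmetric[of L M] by (simp add: M_def)
  then have symm: "ibinom (int M) L = ibinom (int M) (k - 1)"
    by (simp add: ibinom_of_nat)
  have "real_of_int (ibinom (- int k) L) = real_of_int ((-1)^L * ibinom (int M) L)"
    using gbinomial_minus[of "real k" L] k by (simp add: of_int_ibinom M_def of_nat_diff ac_simps)
  then have "ibinom (- int k) L = (-1)^L * ibinom (int M) (k - 1)"
    unfolding symm of_int_eq_iff .
  then have "int p dvd ibinom (int M) (k - 1)"
    using dvd unfolding L_def by (simp add: dvd_mult_unit_iff' is_unit_power_iff)
  then have "int p dvd (\<Prod>i<k - 1. int M - int i)"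
    unfolding ibinom_mult_fact[symmetric] by (rule dvd_mult2)
  then obtain i where i: "i < k - 1" "int p dvd int M - int i"
    using p by (auto simp: prime_dvd_prod_iff)
  define d where "d = j - k + 1 + i"
  have "int M - int i = int p * int p - int d"
    using i k \<open>j < p^2\<close> unfolding M_def L_def d_def by (simp add: power2_eq_square of_nat_diff)
  with i have "int p dvd int p * int p - (int p * int p - int d)"
    by (metis dvd_diff dvd_triv_left)
  then have "p dvd d" by simp
  moreover have "0 < d" "d < p" using i k j unfolding d_def by simp_all
  ultimately show False using nat_dvd_not_less by blast
qed

lemma dvd_ibinom_imp_not_square_dvd_shift:
  fixes p :: nat
  assumes p: "prime p" and j: "j < p" and dvd: "int p dvd ibinom s (p^2 - j)"
    and k: "1 \<le> k" "k \<le> j"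
  shows "\<not> int p^2 dvd s + int k"
proof
  assume "int p^2 dvd s + int k"
  then obtain e where e: "s = int p^2 * e + - int k"
    by (metis add_diff_cancel_right' diff_conv_add_uminus dvdE)
  define L where "L = p^2 - j"
  have "real_of_int (ibinom s L)
      = (\<Sum>i=0..L. real_of_int (ibinom (int p^2 * e) i * ibinom (- int k) (L - i)))"
    using gbinomial_Vandermonde[of "real_of_int (int p^2 * e)" "real_of_int (- int k)" L]
    by (simp add: e of_int_ibinom)
  then have "ibinom s L = (\<Sum>i=0..L. ibinom (int p^2 * e) i * ibinom (- int k) (L - i))"
    by (simp only: of_int_eq_iff flip: of_int_sum)
  also have "\<dots> = ibinom (- int k) L + (\<Sum>i=1..L. ibinom (int p^2 * e) i * ibinom (- int k) (L - i))"
    by (simp add: sum.atLeast_Suc_atMost)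
  finally have vandermonde: "ibinom s L = ibinom (- int k) L
      + (\<Sum>i=1..L. ibinom (int p^2 * e) i * ibinom (- int k) (L - i))" .
  have "int p dvd (\<Sum>i=1..L. ibinom (int p^2 * e) i * ibinom (- int k) (L - i))"
  proof (rule dvd_sum)
    fix i assume "i \<in> {1..L}"
    then have "0 < i" "i < p^2" using k unfolding L_def by auto
    then show "int p dvd ibinom (int p^2 * e) i * ibinom (- int k) (L - i)"
      using prime_dvd_ibinom_square_multiple[OF p] by (simp add: dvd_mult2)
  qed
  with dvd vandermonde have "int p dvd ibinom (- int k) L"
    unfolding L_def by (simp add: dvd_add_left_iff)
  with prime_not_dvd_ibinom_neg[OF p k j] show False
    unfolding L_def by contradiction
qed

lemma prime_square_not_dvd_consecutive_prod:
  fixes p :: nat and b :: int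
  assumes p: "prime p" and j: "j < p"
    and not_sq: "\<And>k. 1 \<le> k \<Longrightarrow> k \<le> j \<Longrightarrow> \<not> int p^2 dvd b + int k"
  shows "\<not> int p^2 dvd (\<Prod>i<j. b + int (j - i))"
proof (rule prime_square_not_dvd_prod)
  show "prime (int p)" using p by simp
next
  fix i assume "i \<in> {..<j}"
  then have "1 \<le> j - i" "j - i \<le> j" by auto
  then show "\<not> int p^2 dvd b + int (j - i)" by (rule not_sq)
next
  fix i i' assume ii: "i \<in> {..<j}" "i' \<in> {..<j}"
    and dvd: "int p dvd b + int (j - i)" "int p dvd b + int (j - i')"
  have "(b + int (j - i)) - (b + int (j - i')) = int i' - int i"
    using ii by auto
  with dvd have "int p dvd int i' - int i"
    by (metis dvd_diff)
  moreover have "\<bar>int i' - int i\<bar> < int p"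
    using ii j by auto
  ultimately show "i = i'"
    using dvd_imp_le_int[of "int i' - int i" "int p"] by fastforce
qed simp

lemma ibinom_trinomial_revision:
  assumes "j \<le> M"
  shows "ibinom a (M - j) * (\<Prod>i<j. a - int (M - j) - int i) = ibinom a M * (\<Prod>i<j. int M - int i)"
proof -
  let ?n = "M - j"
  have "real_of_int (ibinom a M * ibinom (int M) ?n) = real_of_int (ibinom a ?n * ibinom (a - int ?n) j)"
    using gbinomial_trinomial_revision[of ?n M "real_of_int a"] assms by (simp add: of_int_ibinom)
  moreover have "ibinom (int M) ?n = ibinom (int M) j"
    using assms binomial_symmetric[of j M] by (simp add: ibinom_of_nat)
  ultimately have "ibinom a M * ibinom (int M) j = ibinom a ?n * ibinom (a - int ?n) j"
    by (simp only: of_int_eq_iff)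
  then have "ibinom a M * (ibinom (int M) j * fact j) = ibinom a ?n * (ibinom (a - int ?n) j * fact j)"
    by (metis mult.assoc)
  then show ?thesis
    by (simp add: ibinom_mult_fact)
qed

lemma prime_power_dvd_ibinom:
  fixes p :: nat
  assumes p: "prime p" and j: "1 \<le> j" "j < p" and m: "1 \<le> m"
    and not_sq: "\<And>k. 1 \<le> k \<Longrightarrow> k \<le> j \<Longrightarrow> \<not> int p^2 dvd a + int k"
  shows "int p^(lam - 1) dvd ibinom a (p^lam * m - j)"
proof (cases "lam \<le> 1")
  case False
  define M where "M = p^lam * m"
  define n where "n = M - j"
  have "p \<le> p^lam" using False p by (intro self_le_power) (use prime_gt_0_nat[OF p] in auto)
  also have "\<dots> \<le> M" using m unfolding M_def by simp
  finally have "p \<le> M" .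
  then have jM: "j \<le> M" using j by simp
  have pi: "prime (int p)" using p by simp
  have sq_dvd_M: "int p^2 dvd int M"
    unfolding M_def using False by (simp add: dvd_mult2 le_imp_power_dvd flip: of_nat_power)
  have key: "ibinom a n * (\<Prod>i<j. a - int n - int i) = ibinom a M * (\<Prod>i<j. int M - int i)"
    unfolding n_def using jM by (rule ibinom_trinomial_revision)
  have "int M dvd (\<Prod>i<j. int M - int i)"
    using dvd_prodI[of "{..<j}" 0 "\<lambda>i. int M - int i"] j by simp
  then have "int p^lam dvd ibinom a n * (\<Prod>i<j. a - int n - int i)"
    unfolding key M_def by (simp add: dvd_mult dvd_mult_left)
  moreover have "\<not> int p^2 dvd (\<Prod>i<j. a - int n - int i)"
  proof -
    have "(\<Prod>i<j. a - int n - int i) = (\<Prod>i<j. (a - int M) + int (j - i))"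
      using jM unfolding n_def by (intro prod.cong) auto
    moreover have "\<not> int p^2 dvd (a - int M) + int k" if "1 \<le> k" "k \<le> j" for k
    proof
      assume "int p^2 dvd (a - int M) + int k"
      then have "int p^2 dvd ((a - int M) + int k) + int M"
        using sq_dvd_M by (rule dvd_add)
      with not_sq[OF that] show False by simp
    qed
    ultimately show ?thesis
      using prime_square_not_dvd_consecutive_prod[OF p j(2)] by simp
  qed
  ultimately show ?thesis
    unfolding n_def M_def by (rule prime_power_dvd_mult_not_square_dvd[OF pi])
qed simp

lemma prime_power_dvd_ibinom_of_congruent:
  fixes p :: nat
  assumes p: "prime p" and j: "1 \<le> j" "j < p" and m: "1 \<le> m"
    and dvd: "int p dvd ibinom s (p^2 - j)" and cong: "int p^2 dvd a - s"
  shows "int p^(lam - 1) dvd ibinom a (p^lam * m - j)"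
proof (rule prime_power_dvd_ibinom[OF p j m])
  fix k assume k: "1 \<le> k" "k \<le> j"
  have "a + int k = (s + int k) + (a - s)" by simp
  then show "\<not> int p^2 dvd a + int k"
    using dvd_ibinom_imp_not_square_dvd_shift[OF p j(2) dvd k] cong by (metis dvd_add_left_iff)
qed

section \<open>Integer powers of \<open>\<zeta> - q\<close>\<close>

text \<open>The binomial expansion \<open>(\<zeta> - q)\<^sup>a = \<zeta>\<^sup>a (1 - q/\<zeta>)\<^sup>a\<close>, valid for every integer \<open>a\<close>.\<close>

definition binomial_fps :: "complex \<Rightarrow> int \<Rightarrow> complex fps" where
  "binomial_fps z a =
     fps_const (z powi a) * (fps_binomial (of_int a) oo (- fps_const (inverse z) * fps_X))"

lemma binomial_fps_nth:
  assumes "z \<noteq> 0"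
  shows "binomial_fps z a $ n = (-1)^n * (of_int a gchoose n) * z powi (a - int n)"
proof -
  have "- fps_const (inverse z) * fps_X = fps_const (- inverse z) * fps_X"
    by simp
  then have "binomial_fps z a $ n = z powi a * (- inverse z) ^ n * (of_int a gchoose n)"
    unfolding binomial_fps_def fps_mult_left_const_nth
    by (simp only: fps_nth_compose_linear fps_binomial_nth mult.assoc)
  also have "z powi a * (- inverse z) ^ n = (-1)^n * z powi (a - int n)"
    unfolding power_minus[of "inverse z"] using assms
    by (subst power_int_diff) (simp_all add: power_inverse divide_inverse)
  finally show ?thesis by (simp only: mult_ac)
qed

lemma binomial_fps_add:
  assumes "z \<noteq> 0"
  shows "binomial_fps z a * binomial_fps z b = binomial_fps z (a + b)"
proof -
  let ?c = "- fps_const (inverse z) * fps_X"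
  have "fps_binomial (of_int (a + b)) oo ?c = (fps_binomial (of_int a) oo ?c) * (fps_binomial (of_int b) oo ?c)"
    by (simp add: fps_binomial_add_mult fps_compose_mult_distrib)
  then show ?thesis
    using assms by (simp add: binomial_fps_def power_int_add mult_ac)
qed

lemma binomial_fps_of_nat:
  assumes "z \<noteq> 0"
  shows "binomial_fps z (int n) = (fps_const z - fps_X) ^ n"
proof -
  have "fps_const z * (1 - fps_const (inverse z) * fps_X) = fps_const z - fps_const (z * inverse z) * fps_X"
    by (simp add: right_diff_distrib mult.assoc)
  then have "fps_const z - fps_X = fps_const z * (1 - fps_const (inverse z) * fps_X)"
    using assms by simp
  then have "(fps_const z - fps_X) ^ n = fps_const (z ^ n) * (1 - fps_const (inverse z) * fps_X) ^ n"
    by (simp add: power_mult_distrib)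
  also have "(1 - fps_const (inverse z) * fps_X) ^ n
      = fps_binomial (of_nat n) oo (- fps_const (inverse z) * fps_X)"
    using assms by (simp add: one_minus_const_fps_X_power)
  finally show ?thesis by (simp add: binomial_fps_def)
qed

lemma wpow_eq_binomial_fps:
  assumes "z \<noteq> 0"
  shows "wpow z a = binomial_fps z a"
proof (cases "a \<ge> 0")
  case True
  then show ?thesis using binomial_fps_of_nat[OF assms, of "nat a"] by (simp add: wpow_def)
next
  case False
  define k where "k = nat (- a)"
  have a: "a = - int k"
    using False by (simp add: k_def)
  have wpow_k: "wpow z (- int k) = inverse (fps_const z - fps_X) ^ k"
    using False by (simp add: wpow_def a)
  have one: "binomial_fps z 0 = 1"
    using binomial_fps_of_nat[OF assms, of 0] by simp
  have "(fps_const z - fps_X) * binomial_fps z (-1) = 1"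
    using binomial_fps_of_nat[OF assms, of 1] binomial_fps_add[OF assms, of 1 "-1"] one by simp
  then have "inverse (fps_const z - fps_X) = binomial_fps z (-1)"
    by (rule fps_inverse_unique)
  moreover have "binomial_fps z (-1) ^ i = binomial_fps z (- int i)" for i
  proof (induction i)
    case 0
    show ?case using one by simp
  next
    case (Suc i)
    have "binomial_fps z (-1) ^ Suc i = binomial_fps z (-1) * binomial_fps z (- int i)"
      using Suc by simp
    also have "\<dots> = binomial_fps z (- int (Suc i))"
      using binomial_fps_add[OF assms, of "-1" "- int i"] by (simp add: algebra_simps)
    finally show ?case .
  qed
  ultimately show ?thesis
    unfolding a wpow_k by (simp only:)
qed

lemma wpow_add: "z \<noteq> 0 \<Longrightarrow> wpow z a * wpow z b = wpow z (a + b)"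
  by (simp add: wpow_eq_binomial_fps binomial_fps_add)

lemma wpow_nth:
  "z \<noteq> 0 \<Longrightarrow> wpow z a $ n = (-1)^n * of_int (ibinom a n) * z powi (a - int n)"
  by (simp add: wpow_eq_binomial_fps binomial_fps_nth of_int_ibinom)

lemma wpow_0 [simp]: "wpow z 0 = 1"
  by (simp add: wpow_def)

section \<open>Coefficients of the \<open>\<int>\<close>-span of the powers \<open>(\<zeta> - q)\<^sup>R\<^sup>e\<close>\<close>

lemma root_of_unity_nonzero:
  fixes z :: complex
  assumes "N \<ge> 1" "z ^ N = 1"
  shows "z \<noteq> 0"
  using assms by (metis one_neq_zero power_0_left not_one_le_zero)

lemma Zzeta_add: "x \<in> Zzeta N z \<Longrightarrow> y \<in> Zzeta N z \<Longrightarrow> x + y \<in> Zzeta N z"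
proof -
  assume "x \<in> Zzeta N z" "y \<in> Zzeta N z"
  then obtain c d where "x = (\<Sum>k<N. of_int (c k) * z ^ k)" "y = (\<Sum>k<N. of_int (d k) * z ^ k)"
    unfolding Zzeta_def by blast
  then have "x + y = (\<Sum>k<N. of_int (c k + d k) * z ^ k)"
    by (simp add: sum.distrib algebra_simps)
  then show ?thesis unfolding Zzeta_def mem_Collect_eq by (rule exI[of _ "\<lambda>k. c k + d k"])
qed

lemma Zzeta_of_int_mult: "x \<in> Zzeta N z \<Longrightarrow> of_int a * x \<in> Zzeta N z"
proof -
  assume "x \<in> Zzeta N z"
  then obtain c where "x = (\<Sum>k<N. of_int (c k) * z ^ k)"
    unfolding Zzeta_def by blast
  then have "of_int a * x = (\<Sum>k<N. of_int (a * c k) * z ^ k)"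
    by (simp add: sum_distrib_left algebra_simps)
  then show ?thesis unfolding Zzeta_def mem_Collect_eq by (rule exI[of _ "\<lambda>k. a * c k"])
qed

lemma Zzeta_power: "k < N \<Longrightarrow> z ^ k \<in> Zzeta N z"
proof -
  assume k: "k < N"
  have "(\<Sum>i<N. of_int (if i = k then 1 else 0) * z ^ i) = (\<Sum>i<N. if i = k then z ^ i else 0)"
    by (rule sum.cong) auto
  also have "\<dots> = z ^ k" using k by (simp add: sum.delta)
  finally show ?thesis
    unfolding Zzeta_def mem_Collect_eq by (intro exI[of _ "\<lambda>i. if i = k then 1 else 0"]) simp
qed

lemma Zzeta_powi:
  assumes N: "N \<ge> 1" and zN: "z ^ N = 1"
  shows "z powi e \<in> Zzeta N z"
proof -
  have "z powi e = z powi (int N * (e div int N)) * z powi (e mod int N)"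
    using root_of_unity_nonzero[OF N zN] by (simp flip: power_int_add)
  also have "z powi (int N * (e div int N)) = 1"
    by (simp add: power_int_mult zN)
  also have "e mod int N = int (nat (e mod int N))"
    using N by simp
  finally have "z powi e = z ^ nat (e mod int N)"
    by (metis mult_1 power_int_of_nat)
  moreover have "nat (e mod int N) < N"
    using N by (simp add: nat_less_iff)
  ultimately show ?thesis using Zzeta_power by metis
qed

lemma cong0_add: "cong0 N z x p mu \<Longrightarrow> cong0 N z y p mu \<Longrightarrow> cong0 N z (x + y) p mu"
  unfolding cong0_def by (metis Zzeta_add distrib_left)

lemma cong0_of_int_mult: "cong0 N z x p mu \<Longrightarrow> cong0 N z (of_int a * x) p mu"
  unfolding cong0_def by (metis Zzeta_of_int_mult mult.left_commute)

inductive_set wpow_span :: "complex \<Rightarrow> int \<Rightarrow> complex fps set" for z R where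
  wpow: "wpow z (R * e) \<in> wpow_span z R"
| add: "f \<in> wpow_span z R \<Longrightarrow> g \<in> wpow_span z R \<Longrightarrow> f + g \<in> wpow_span z R"
| const_mult: "f \<in> wpow_span z R \<Longrightarrow> fps_const (of_int c) * f \<in> wpow_span z R"

lemma wpow_span_wpow_mult:
  assumes "z \<noteq> 0" "g \<in> wpow_span z R"
  shows "wpow z (R * e) * g \<in> wpow_span z R"
  using assms(2)
proof induction
  case (wpow e')
  then show ?case using wpow_add[OF assms(1)] wpow_span.wpow by (metis distrib_left)
next
  case (add f g)
  then show ?case by (simp add: distrib_left wpow_span.add)
next
  case (const_mult f c)
  then show ?case by (metis wpow_span.const_mult mult.left_commute)
qed

lemma wpow_span_mult:
  assumes "z \<noteq> 0" "f \<in> wpow_span z R" "g \<in> wpow_span z R"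
  shows "f * g \<in> wpow_span z R"
  using assms(2)
proof induction
  case (wpow e)
  then show ?case using wpow_span_wpow_mult[OF assms(1,3)] by simp
next
  case (add f1 f2)
  then show ?case by (simp add: distrib_right wpow_span.add)
next
  case (const_mult f c)
  then show ?case by (metis wpow_span.const_mult mult.assoc)
qed

lemma wpow_span_const: "fps_const (of_int c) \<in> wpow_span z R"
  using wpow_span.const_mult[OF wpow_span.wpow[of z R 0], of c] by simp

lemma wpow_span_sum:
  "(\<And>x. x \<in> A \<Longrightarrow> f x \<in> wpow_span z R) \<Longrightarrow> (\<Sum>x\<in>A. f x) \<in> wpow_span z R"
  by (induction A rule: infinite_finite_induct)
    (auto intro: wpow_span.add wpow_span_const[of 0, simplified])

lemma wpow_span_prod:
  "z \<noteq> 0 \<Longrightarrow> (\<And>x. x \<in> A \<Longrightarrow> f x \<in> wpow_span z R) \<Longrightarrow> (\<Prod>x\<in>A. f x) \<in> wpow_span z R"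
  by (induction A rule: infinite_finite_induct)
    (auto intro: wpow_span_mult wpow_span_const[of 1, simplified])

lemma wpow_span_coeff_cong0:
  assumes "f \<in> wpow_span z R" and N: "N \<ge> 1" and zN: "z ^ N = 1"
    and dvd: "\<And>e. int p ^ mu dvd ibinom (s + R * e) n"
  shows "cong0 N z ((wpow z s * f) $ n) p mu"
  using assms(1)
proof induction
  case (wpow e)
  obtain d where d: "ibinom (s + R * e) n = int p ^ mu * d"
    using dvd by blast
  have "(wpow z s * wpow z (R * e)) $ n = of_nat (p ^ mu) * (of_int ((-1)^n * d) * z powi (s + R * e - int n))"
    using root_of_unity_nonzero[OF N zN] by (simp add: wpow_add wpow_nth d)
  then show ?case
    unfolding cong0_def using Zzeta_of_int_mult[OF Zzeta_powi[OF N zN]] by blast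
next
  case (add f g)
  then show ?case by (simp add: distrib_left cong0_add)
next
  case (const_mult f c)
  have "wpow z s * (fps_const (of_int c) * f) = fps_const (of_int c) * (wpow z s * f)"
    by (simp add: ac_simps)
  then have "(wpow z s * (fps_const (of_int c) * f)) $ n = of_int c * (wpow z s * f) $ n"
    by (simp only: fps_mult_left_const_nth)
  then show ?case using const_mult.IH by (simp add: cong0_of_int_mult)
qed

section \<open>Integer polynomials evaluated at \<open>(\<zeta> - q)\<^sup>R\<close>\<close>

lemma fps_const_sum: "fps_const (\<Sum>x\<in>A. f x) = (\<Sum>x\<in>A. fps_const (f x))"
  by (induction A rule: infinite_finite_induct) (simp_all flip: fps_const_add)

lemma subst_poly_mult: "subst_poly z R (P * Q) = subst_poly z R P * subst_poly z R Q"
proof -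
  have "map_poly (\<lambda>c. fps_const (of_rat c :: complex)) (P * Q) =
      map_poly (\<lambda>c. fps_const (of_rat c)) P * map_poly (\<lambda>c. fps_const (of_rat c)) Q"
    by (rule poly_eqI) (simp add: coeff_map_poly coeff_mult of_rat_sum of_rat_mult fps_const_sum)
  then show ?thesis unfolding subst_poly_def by simp
qed

lemma subst_poly_diff: "subst_poly z R (P - Q) = subst_poly z R P - subst_poly z R Q"
proof -
  have "map_poly (\<lambda>c. fps_const (of_rat c :: complex)) (P - Q) =
      map_poly (\<lambda>c. fps_const (of_rat c)) P - map_poly (\<lambda>c. fps_const (of_rat c)) Q"
    by (rule poly_eqI) (simp add: coeff_map_poly of_rat_diff)
  then show ?thesis unfolding subst_poly_def by simp
qed

lemma subst_poly_1 [simp]: "subst_poly z R 1 = 1"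
  by (simp add: subst_poly_def)

lemma subst_poly_monom: "subst_poly z R (monom 1 k) = wpow z R ^ k"
  by (simp add: subst_poly_def map_poly_monom poly_monom)

lemma subst_poly_prod: "subst_poly z R (\<Prod>x\<in>A. f x) = (\<Prod>x\<in>A. subst_poly z R (f x))"
  by (induction A rule: infinite_finite_induct) (simp_all add: subst_poly_mult)

definition int_coeffs :: "rat poly \<Rightarrow> bool" where
  "int_coeffs Q \<longleftrightarrow> (\<forall>i. coeff Q i \<in> \<int>)"

lemma int_coeffs_1: "int_coeffs 1"
  by (simp add: int_coeffs_def coeff_1)

lemma int_coeffs_monom: "int_coeffs (monom 1 k)"
  by (simp add: int_coeffs_def coeff_monom)

lemma int_coeffs_add: "int_coeffs P \<Longrightarrow> int_coeffs Q \<Longrightarrow> int_coeffs (P + Q)"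
  by (simp add: int_coeffs_def)

lemma int_coeffs_diff: "int_coeffs P \<Longrightarrow> int_coeffs Q \<Longrightarrow> int_coeffs (P - Q)"
  by (simp add: int_coeffs_def)

lemma int_coeffs_mult: "int_coeffs P \<Longrightarrow> int_coeffs Q \<Longrightarrow> int_coeffs (P * Q)"
  unfolding int_coeffs_def coeff_mult by (auto intro!: Ints_sum Ints_mult)

lemma int_coeffs_prod: "(\<And>x. x \<in> A \<Longrightarrow> int_coeffs (f x)) \<Longrightarrow> int_coeffs (\<Prod>x\<in>A. f x)"
  by (induction A rule: infinite_finite_induct) (auto intro: int_coeffs_1 int_coeffs_mult)

lemma subst_poly_in_wpow_span:
  assumes "z \<noteq> 0" and "int_coeffs Q"
  shows "subst_poly z R Q \<in> wpow_span z R"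
  using assms(2)
proof (induction Q)
  case 0
  show ?case using wpow_span_const[of 0] by (simp add: subst_poly_def)
next
  case (pCons a Q)
  then have "a \<in> \<int>" "int_coeffs Q"
    unfolding int_coeffs_def by (metis coeff_pCons_0, metis coeff_pCons_Suc)
  then obtain c where c: "a = of_int c" and "subst_poly z R Q \<in> wpow_span z R"
    using pCons.IH by (auto elim: Ints_cases)
  then have "fps_const (of_int c) + wpow z (R * 1) * subst_poly z R Q \<in> wpow_span z R"
    by (intro wpow_span.add wpow_span_const wpow_span_wpow_mult[OF assms(1)])
  moreover have "subst_poly z R (pCons a Q) = fps_const (of_int c) + wpow z (R * 1) * subst_poly z R Q"
    by (simp add: subst_poly_def map_poly_pCons c)
  ultimately show ?case by simp
qed

lemma qpoch_Suc: "qpoch (Suc n) = qpoch n * (1 - monom 1 (Suc n))"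
  by (simp add: qpoch_def)

lemma qpoch_nonzero: "qpoch n \<noteq> 0"
proof -
  have "coeff (1 - monom (1::rat) k) 0 = 1" if "k \<ge> 1" for k
    using that by (simp add: coeff_monom)
  then have "1 - monom (1::rat) k \<noteq> 0" if "k \<ge> 1" for k
    using that by (metis coeff_0 zero_neq_one)
  then show ?thesis by (simp add: qpoch_def)
qed

lemma int_coeffs_qpoch: "int_coeffs (qpoch n)"
  unfolding qpoch_def by (intro int_coeffs_prod int_coeffs_diff int_coeffs_1 int_coeffs_monom)

text \<open>Gaussian binomials via the q-Pascal rule, which makes the integrality of their coefficients
  evident; \<^const>\<open>gauss_binom\<close> is the same polynomial written as a quotient.\<close>

fun qbinomial :: "nat \<Rightarrow> nat \<Rightarrow> rat poly" where
  "qbinomial n 0 = 1"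
| "qbinomial 0 (Suc k) = 0"
| "qbinomial (Suc n) (Suc k) = qbinomial n k + monom 1 (Suc k) * qbinomial n (Suc k)"

lemma int_coeffs_qbinomial: "int_coeffs (qbinomial n k)"
  by (induction n k rule: qbinomial.induct)
    (auto intro!: int_coeffs_1 int_coeffs_add int_coeffs_mult int_coeffs_monom simp: int_coeffs_def[of 0])

lemma qbinomial_eq_0: "n < k \<Longrightarrow> qbinomial n k = 0"
  by (induction n k rule: qbinomial.induct) auto

lemma qbinomial_mult_qpoch: "k \<le> n \<Longrightarrow> qbinomial n k * qpoch (n - k) * qpoch k = qpoch n"
proof (induction n arbitrary: k)
  case 0
  then show ?case by (simp add: qpoch_def)
next
  case (Suc n)
  show ?case
  proof (cases k)
    case 0
    then show ?thesis by (simp add: qpoch_def)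
  next
    case (Suc k')
    then have k': "k' \<le> n" using Suc.prems by simp
    have first: "qbinomial n k' * qpoch (n - k') * qpoch (Suc k') = qpoch n * (1 - monom 1 (Suc k'))"
      using Suc.IH[OF k'] by (simp add: qpoch_Suc ac_simps)
    have second: "monom 1 (Suc k') * qbinomial n (Suc k') * qpoch (n - k') * qpoch (Suc k')
        = qpoch n * (monom 1 (Suc k') - monom 1 (Suc n))"
    proof (cases "k' = n")
      case True
      then show ?thesis by (simp add: qbinomial_eq_0)
    next
      case False
      then have kn: "Suc k' \<le> n" using k' by simp
      then have "qpoch (n - k') = qpoch (n - Suc k') * (1 - monom 1 (n - k'))"
        by (metis Suc_diff_Suc Suc_le_lessD qpoch_Suc)
      then have "monom 1 (Suc k') * qbinomial n (Suc k') * qpoch (n - k') * qpoch (Suc k')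
          = monom 1 (Suc k') * (1 - monom 1 (n - k')) * qpoch n"
        using Suc.IH[OF kn] by (simp add: ac_simps)
      also have "monom 1 (Suc k') * (1 - monom (1::rat) (n - k')) = monom 1 (Suc k') - monom 1 (Suc n)"
        using kn by (simp add: right_diff_distrib mult_monom)
      finally show ?thesis by (simp add: ac_simps)
    qed
    have "qbinomial (Suc n) k * qpoch (Suc n - k) * qpoch k
        = qbinomial n k' * qpoch (n - k') * qpoch (Suc k')
          + monom 1 (Suc k') * qbinomial n (Suc k') * qpoch (n - k') * qpoch (Suc k')"
      using Suc by (simp add: algebra_simps)
    also have "\<dots> = qpoch (Suc n)"
      unfolding first second by (simp add: qpoch_Suc algebra_simps)
    finally show ?thesis .
  qed
qed

lemma gauss_binom_eq_qbinomial: "gauss_binom n k = qbinomial n k"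
proof (cases "k \<le> n")
  case True
  then have "qpoch n div (qpoch (n - k) * qpoch k) = qbinomial n k"
    using qbinomial_mult_qpoch[OF True] qpoch_nonzero
    by (metis mult.assoc mult_eq_0_iff nonzero_mult_div_cancel_right)
  with True show ?thesis by (simp add: gauss_binom_def)
next
  case False
  then show ?thesis by (simp add: gauss_binom_def qbinomial_eq_0)
qed

lemma int_coeffs_gauss_binom: "int_coeffs (gauss_binom n k)"
  by (simp add: gauss_binom_eq_qbinomial int_coeffs_qbinomial)

section \<open>Truncation of \<open>F\<^sub>t((\<zeta> - q)\<^sup>R)\<close>\<close>

lemma fps_X_dvd_of_nth_0:
  fixes f :: "'a :: comm_ring_1 fps"
  assumes "f $ 0 = 0"
  shows "fps_X dvd f"
proof
  show "f = fps_X * fps_shift 1 f"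
    using assms by (intro fps_ext) simp
qed

lemma fps_nth_eq_0_if_fps_X_power_dvd:
  fixes f :: "'a :: comm_ring_1 fps"
  assumes "fps_X ^ k dvd f" "i < k"
  shows "f $ i = 0"
  using assms by (auto simp: fps_X_power_mult_nth elim!: dvdE)

lemma fps_X_power_dvd_subst_qpoch:
  assumes N: "N \<ge> 1" and zN: "z ^ N = 1" and a: "N * k \<le> a"
  shows "fps_X ^ k dvd subst_poly z R (qpoch a)"
proof -
  define K where "K = (\<lambda>c. N * c) ` {1..k}"
  have card_K: "card K = k"
    unfolding K_def using N by (subst card_image) (auto simp: inj_on_def)
  have K_sub: "K \<subseteq> {1..a}"
  proof
    fix x assume "x \<in> K"
    then obtain c where "1 \<le> c" "c \<le> k" "x = N * c"
      unfolding K_def by auto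
    then have "1 \<le> x" "x \<le> N * k"
      using N by simp_all
    then show "x \<in> {1..a}" using a by simp
  qed
  have const_term: "(1 - wpow z R ^ (N * c)) $ 0 = 0" for c
  proof -
    have "(wpow z R ^ (N * c)) $ 0 = z powi (R * int (N * c))"
      using root_of_unity_nonzero[OF N zN] by (simp add: fps_power_zeroth wpow_nth power_int_power')
    also have "\<dots> = (z ^ N) powi (R * int c)"
      by (simp add: power_int_power ac_simps)
    finally show ?thesis by (simp add: zN)
  qed
  have "(\<Prod>k'\<in>K. fps_X) dvd (\<Prod>k'\<in>K. 1 - wpow z R ^ k')"
    by (rule prod_dvd_prod) (auto simp: K_def intro!: fps_X_dvd_of_nth_0 const_term)
  then have "fps_X ^ k dvd (\<Prod>k'\<in>K. 1 - wpow z R ^ k')"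
    by (simp add: card_K)
  also have "\<dots> dvd (\<Prod>k'\<in>{1..a}. 1 - wpow z R ^ k')"
    by (rule prod_dvd_prod_subset[OF _ K_sub]) simp
  finally show ?thesis
    by (simp add: qpoch_def subst_poly_prod subst_poly_diff subst_poly_monom)
qed

lemma Fterm_in_wpow_span:
  assumes "z \<noteq> 0"
  shows "Fterm t z R (a, jj) \<in> wpow_span z R"
proof -
  have sign: "fps_const ((-1) ^ nat (hpp t) :: complex) = fps_const (of_int ((-1) ^ nat (hpp t)))"
    by simp
  show ?thesis
    unfolding Fterm_def prod.case sign
    by (intro wpow_span_mult[OF assms] wpow_span_sum wpow_span_prod[OF assms] wpow_span_const
        wpow_span.wpow subst_poly_in_wpow_span[OF assms] int_coeffs_qpoch int_coeffs_gauss_binom)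
qed

lemma subst_qpoch_dvd_Fterm: "subst_poly z R (qpoch a) dvd Fterm t z R (a, jj)"
  unfolding Fterm_def prod.case by (intro dvd_mult2 dvd_mult dvd_refl)

lemma Fterm_eq_0:
  assumes "l \<in> {1..mt t - 1}" and "jj l > a + 1"
  shows "Fterm t z R (a, jj) = 0"
proof -
  have factor_0: "subst_poly z R (gauss_binom (a + (if l \<le> k then 1 else 0)) (jj l)) = 0" for k
    using assms(2) by (simp add: gauss_binom_def subst_poly_def)
  have prod_0: "(\<Prod>l=1..mt t - 1. subst_poly z R (gauss_binom (a + (if l \<le> k then 1 else 0)) (jj l))) = 0" for k
    by (rule prod_zero) (simp, use assms(1) factor_0 in blast)
  show ?thesis unfolding Fterm_def prod.case prod_0 by simp
qed

lemma infsum_nth_eq_sum_nth: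
  fixes f :: "'b \<Rightarrow> complex fps"
  assumes "finite T" "T \<subseteq> S" "\<And>x. x \<in> S - T \<Longrightarrow> f x $ i = 0"
  shows "(\<Sum>\<^sub>\<infinity>x\<in>S. f x $ i) = (\<Sum>x\<in>T. f x) $ i"
proof -
  have "(\<Sum>\<^sub>\<infinity>x\<in>S. f x $ i) = (\<Sum>\<^sub>\<infinity>x\<in>T. f x $ i)"
    by (rule infsum_cong_neutral) (use assms in auto)
  then show ?thesis using assms(1) by (simp add: fps_sum_nth)
qed

lemma subst_qpoch_nth_eq_0:
  assumes "N \<ge> 1" "z ^ N = 1" "N * Suc n \<le> a" "i \<le> n"
  shows "subst_poly z R (qpoch a) $ i = 0"
  using fps_X_power_dvd_subst_qpoch[OF assms(1-3)]
  by (rule fps_nth_eq_0_if_fps_X_power_dvd) (use assms(4) in simp)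

lemma Fterm_nth_eq_0:
  assumes "N \<ge> 1" "z ^ N = 1" "N * Suc n \<le> a" "i \<le> n"
  shows "Fterm t z R (a, jj) $ i = 0"
  using dvd_trans[OF fps_X_power_dvd_subst_qpoch[OF assms(1-3)] subst_qpoch_dvd_Fterm]
  by (rule fps_nth_eq_0_if_fps_X_power_dvd) (use assms(4) in simp)

lemma F_subst_1_truncation:
  assumes N: "N \<ge> 1" and zN: "z ^ N = 1"
  obtains G where "G \<in> wpow_span z R" and "\<And>i. i \<le> n \<Longrightarrow> F_subst 1 z R $ i = G $ i"
proof
  define B where "B = N * Suc n"
  show "(\<Sum>a<B. subst_poly z R (qpoch a)) \<in> wpow_span z R"
    using root_of_unity_nonzero[OF N zN]
    by (intro wpow_span_sum subst_poly_in_wpow_span int_coeffs_qpoch)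
  fix i assume "i \<le> n"
  have "subst_poly z R (qpoch a) $ i = 0" if "a \<in> UNIV - {..<B}" for a
    using subst_qpoch_nth_eq_0[OF N zN _ \<open>i \<le> n\<close>] that unfolding B_def by simp
  then have "(\<Sum>\<^sub>\<infinity>a\<in>UNIV. subst_poly z R (qpoch a) $ i) = (\<Sum>a<B. subst_poly z R (qpoch a)) $ i"
    by (intro infsum_nth_eq_sum_nth) auto
  then show "F_subst 1 z R $ i = (\<Sum>a<B. subst_poly z R (qpoch a)) $ i"
    unfolding F_subst_def by simp
qed

lemma F_subst_tuples_truncation:
  assumes N: "N \<ge> 1" and zN: "z ^ N = 1" and "t \<noteq> 1"
  obtains G where "G \<in> wpow_span z R" and "\<And>i. i \<le> n \<Longrightarrow> F_subst t z R $ i = G $ i"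
proof
  define B where "B = N * Suc n"
  define Tup where
    "Tup = {jj. \<forall>x. (x \<in> {1..mt t - 1} \<longrightarrow> jj x \<in> {..B}) \<and> (x \<notin> {1..mt t - 1} \<longrightarrow> jj x = 0)}"
  define T where "T = (UNIV \<times> tuples t) \<inter> ({..<B} \<times> Tup)"
  show "(\<Sum>nj\<in>T. Fterm t z R nj) \<in> wpow_span z R"
    using Fterm_in_wpow_span[OF root_of_unity_nonzero[OF N zN]] by (intro wpow_span_sum) auto
  have "finite T"
    unfolding T_def Tup_def
    by (intro finite_Int disjI2 finite_cartesian_product finite_set_of_finite_funs) auto
  have vanish: "Fterm t z R (a, jj) $ i = 0"
    if "(a, jj) \<in> (UNIV \<times> tuples t) - T" "i \<le> n" for a jj i
  proof (cases "B \<le> a")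
    case True
    then show ?thesis using Fterm_nth_eq_0[OF N zN _ that(2)] unfolding B_def by blast
  next
    case False
    with that have "jj \<notin> Tup" "jj \<in> tuples t"
      unfolding T_def by auto
    then obtain l where "l \<in> {1..mt t - 1}" "jj l > B"
      unfolding Tup_def tuples_def by auto
    then show ?thesis using False Fterm_eq_0 by simp
  qed
  fix i assume "i \<le> n"
  then have "(\<Sum>\<^sub>\<infinity>nj\<in>UNIV \<times> tuples t. Fterm t z R nj $ i) = (\<Sum>nj\<in>T. Fterm t z R nj) $ i"
    using \<open>finite T\<close> by (intro infsum_nth_eq_sum_nth) (auto simp: T_def intro: vanish)
  then show "F_subst t z R $ i = (\<Sum>nj\<in>T. Fterm t z R nj) $ i"
    unfolding F_subst_def using \<open>t \<noteq> 1\<close> by simp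
qed

lemma F_subst_truncation:
  assumes "N \<ge> 1" "z ^ N = 1"
  obtains G where "G \<in> wpow_span z R" and "\<And>i. i \<le> n \<Longrightarrow> F_subst t z R $ i = G $ i"
proof (cases "t = 1")
  case True
  then show ?thesis using F_subst_1_truncation[OF assms] that by blast
next
  case False
  then show ?thesis using F_subst_tuples_truncation[OF assms False] that by blast
qed

theorem lemma4p11:
  fixes p :: nat and r s :: int and j t N m lam :: nat and z :: complex
  assumes "prime p"
    and "j \<in> {1..p - 1}"
    and "t \<ge> 1" and "N \<ge> 1"
    and "z ^ N = 1"
    and "int p dvd ibinom s (p ^ 2 - j)"
    and "m \<ge> 1" and "lam \<ge> 1"
  shows "cong0 N z (xi (int (p ^ 2) * r) s z t (p ^ lam * m - j)) p (lam - 1)"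
proof -
  define n where "n = p ^ lam * m - j"
  define R where "R = int (p ^ 2) * r"
  have j: "1 \<le> j" "j < p"
    using assms(1,2) prime_gt_1_nat[OF assms(1)] by auto
  have dvd: "int p ^ (lam - 1) dvd ibinom (s + R * e) n" for e
    unfolding n_def R_def
    by (rule prime_power_dvd_ibinom_of_congruent[OF assms(1) j assms(7,6)]) simp
  obtain G where G: "G \<in> wpow_span z R" "\<And>i. i \<le> n \<Longrightarrow> F_subst t z R $ i = G $ i"
    using F_subst_truncation[OF assms(4,5)] by blast
  have "xi R s z t n = (wpow z s * G) $ n"
    unfolding xi_def fps_mult_nth using G(2) by (intro sum.cong) auto
  then show ?thesis
    using wpow_span_coeff_cong0[OF G(1) assms(4,5) dvd] unfolding n_def R_def by simp
qed

end
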